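(* Let $\mathcal{X}=\mathbb{R}^N$, let $Q\ge 1$ be an integer, and let $h:\mathcal{X}\times\mathcal{X}\to\mathbb{R}_+$ be a (conditionally) negative definite kernel, with $d$ the distance it induces on measures via $d(\eta_1,\eta_2)^2 = -\frac{1}{2}\int_\mathcal{X}\int_\mathcal{X} h(x,y)\,(\eta_1-\eta_2)(dx)\,(\eta_1-\eta_2)(dy)$ for signed measures $\eta_1,\eta_2$ of equal total mass. Let $\eta$ be a signed measure on $\mathcal{X}$ of finite total variation which belongs to the Hilbert space embedding associated with $h$ (i.e., to the reproducing kernel Hilbert space of the kernel $k_{z_0}(x,y)=\frac{h(x,z_0)+h(y,z_0)-h(x,y)}{2}$, $z_0\in\mathcal{X}$ fixed, via the embedding $\mu\mapsto\int k_{z_0}(x,\cdot)\,\mu(dx)$), and such that $\int\eta(dx)>0$. Suppose: 1. $h(\cdot,\cdot)$ is continuous on $\mathcal{X}\times\mathcal{X}$; 2. there exists a positive (definite) kernel $k$ associated to $h$, in the sense that $h(x,y)=k(x,x)+k(y,y)-2k(x,y)$ for all $x,y\in\mathcal{X}$, such that $\lim_{x\to\infty}k(x,x)=\infty$ and, for every $y\in\mathcal{X}$, there exists $b_y<\infty$ with $|k(x,y)|\le b_y$ for all $x\in\mathcal{X}$; 3. there exists a constant $C_L$ such that $k(x,y)\ge C_L$ for all $x,y\in\mathcal{X}$. Then, writing $\delta_{\alpha,X}:=\sum_{q=1}^Q\alpha_q\delta_{x_q}$, the minimization problem $$\inf_{X=(x_q)_{q=1}^Q\in\mathcal{X}^Q,\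 \alpha=(\alpha_q)_{q=1}^Q\in(\mathbb{R}_+)^Q,\ \sum_q\alpha_q=\int\eta(dx)} d\left(\delta_{\alpha,X},\eta\right)^2$$ admits at least one solution $\alpha^\star\in(\mathbb{R}_+)^Q$, $X^\star\in\mathcal{X}^Q$.
   Context: Measures are finite total variation signed measures on $\mathcal{X}=\mathbb{R}^N$; $\delta_x$ denotes the Dirac mass at $x$. The kernel $k$ induces a Hilbert space structure on measures with $\langle\delta_x,\delta_y\rangle=k(x,y)$ and $\|\eta_1-\eta_2\|=d(\eta_1,\eta_2)$. *)

theory Defs
  imports "HOL-Analysis.Analysis"
begin

definition pos_def_kernel :: "('a \<Rightarrow> 'a \<Rightarrow> real) \<Rightarrow> bool" where
  "pos_def_kernel k \<longleftrightarrow> (\<forall>x y. k x y = k y x) \<and>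
     (\<forall>n (c :: nat \<Rightarrow> real) (x :: nat \<Rightarrow> 'a).
        (\<Sum>i<n. \<Sum>j<n. c i * c j * k (x i) (x j)) \<ge> 0)"

definition cond_neg_def_kernel :: "('a \<Rightarrow> 'a \<Rightarrow> real) \<Rightarrow> bool" where
  "cond_neg_def_kernel h \<longleftrightarrow> (\<forall>x y. h x y = h y x) \<and>
     (\<forall>n (c :: nat \<Rightarrow> real) (x :: nat \<Rightarrow> 'a). (\<Sum>i<n. c i) = 0 \<longrightarrow>
        (\<Sum>i<n. \<Sum>j<n. c i * c j * h (x i) (x j)) \<le> 0)"

definition kz :: "('a \<Rightarrow> 'a \<Rightarrow> real) \<Rightarrow> 'a \<Rightarrow> 'a \<Rightarrow> 'a \<Rightarrow> real" where
  "kz h z0 x y = (h x z0 + h y z0 - h x y) / 2"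

text \<open>A finite-total-variation signed measure is represented as a pair (P, M) of finite
  Borel measures, meaning eta = P - M.\<close>
type_synonym 'a smeasure = "'a measure \<times> 'a measure"

definition smeasure :: "'a::topological_space smeasure \<Rightarrow> bool" where
  "smeasure \<eta> \<longleftrightarrow> sets (fst \<eta>) = sets borel \<and> sets (snd \<eta>) = sets borel \<and>
     finite_measure (fst \<eta>) \<and> finite_measure (snd \<eta>)"

definition smass :: "'a smeasure \<Rightarrow> real" where
  "smass \<eta> = measure (fst \<eta>) (space (fst \<eta>)) - measure (snd \<eta>) (space (snd \<eta>))"

text \<open>Membership in the Hilbert space embedding of h (moment condition
  \<integral> sqrt(k_{z0}(x,x)) |eta|(dx) < \<infinity>, where k_{z0}(x,x) = h(x,z0) when h(x,x)=0).\<close>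
definition in_embedding :: "('a \<Rightarrow> 'a \<Rightarrow> real) \<Rightarrow> 'a \<Rightarrow> 'a smeasure \<Rightarrow> bool" where
  "in_embedding h z0 \<eta> \<longleftrightarrow>
     integrable (fst \<eta>) (\<lambda>x. sqrt (kz h z0 x x)) \<and> integrable (snd \<eta>) (\<lambda>x. sqrt (kz h z0 x x))"

definition dbl_int :: "('a \<Rightarrow> 'a \<Rightarrow> real) \<Rightarrow> 'a measure \<Rightarrow> 'a measure \<Rightarrow> real" where
  "dbl_int K M N = (\<integral>x. (\<integral>y. K x y \<partial>N) \<partial>M)"

definition sinner :: "('a \<Rightarrow> 'a \<Rightarrow> real) \<Rightarrow> 'a smeasure \<Rightarrow> 'a smeasure \<Rightarrow> real" where
  "sinner K \<eta>1 \<eta>2 = dbl_int K (fst \<eta>1) (fst \<eta>2) - dbl_int K (fst \<eta>1) (snd \<eta>2)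
      - dbl_int K (snd \<eta>1) (fst \<eta>2) + dbl_int K (snd \<eta>1) (snd \<eta>2)"

text \<open>Squared distance d(eta1,eta2)^2 = \<parallel>eta1 - eta2\<parallel>^2 in the Hilbert embedding of h
  (for equal masses this is -1/2 \<integral>\<integral> h d(eta1-eta2) d(eta1-eta2)).\<close>
definition dist2 :: "('a \<Rightarrow> 'a \<Rightarrow> real) \<Rightarrow> 'a \<Rightarrow> 'a smeasure \<Rightarrow> 'a smeasure \<Rightarrow> real" where
  "dist2 h z0 \<eta>1 \<eta>2 = sinner (kz h z0) \<eta>1 \<eta>1 - 2 * sinner (kz h z0) \<eta>1 \<eta>2
      + sinner (kz h z0) \<eta>2 \<eta>2"

definition dirac_comb :: "nat \<Rightarrow> (nat \<Rightarrow> real) \<Rightarrow> (nat \<Rightarrow> 'a::topological_space) \<Rightarrow> 'a smeasure" where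
  "dirac_comb Q \<alpha> X =
     (measure_of UNIV (sets borel) (\<lambda>A. \<Sum>q<Q. ennreal (\<alpha> q) * indicator A (X q)),
      null_measure borel)"

end

theory Submission
  imports Defs
begin

text \<open>Expanding the square, \<open>d(\<delta>\<^sub>\<alpha>\<^sub>,\<^sub>X, \<eta>)\<^sup>2\<close> is \<open>\<parallel>\<eta>\<parallel>\<^sup>2\<close> plus the energy
  \<open>\<Sum>\<^sub>p \<Sum>\<^sub>q \<alpha>\<^sub>p \<alpha>\<^sub>q K(x\<^sub>p, x\<^sub>q) - 2 \<Sum>\<^sub>q \<alpha>\<^sub>q g(x\<^sub>q)\<close>, where \<open>K = k\<^sub>z\<^sub>0\<close> and
  \<open>g = \<integral> K(\<cdot>, y) \<eta>(dy)\<close> is the potential of \<open>\<eta>\<close>.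
  Cauchy-Schwarz and the moment condition on \<open>\<eta>\<close> give \<open>|g(x)| \<le> c sqrt (K(x, x))\<close>; since every
  column \<open>K(\<cdot>, y)\<close> is bounded while \<open>K(x, x) \<rightarrow> \<infinity>\<close>, dominated convergence even gives
  \<open>g(x) = o(sqrt (K(x, x)))\<close> at infinity. Hence the self-energy \<open>a\<^sup>2 K(x, x) - 2 a g(x)\<close> of an atom
  is coercive in \<open>x\<close> once its weight \<open>a\<close> is bounded below, and is asymptotically nonnegative when
  its weight tends to zero, wherever the atom goes; the cross terms are bounded below because \<open>K\<close>
  is. Along a minimising sequence the weights converge by compactness of the simplex, the atoms of
  positive limiting weight stay in a ball and converge along a subsequence, and the energy is
  lower semicontinuous along it, so the limit configuration is a minimiser.\<close>

section \<open>Dirac combs and the kernel \<open>k\<^sub>z\<^sub>0\<close>\<close>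

lemma fst_dirac_comb:
  fixes X :: "nat \<Rightarrow> 'a::topological_space"
  shows "fst (dirac_comb Q \<alpha> X) = distr (density (count_space {..<Q}) (\<lambda>q. ennreal (\<alpha> q))) borel X"
proof -
  let ?E = "distr (density (count_space {..<Q}) (\<lambda>q. ennreal (\<alpha> q))) borel X"
  have "fst (dirac_comb Q \<alpha> X) = measure_of UNIV (sets borel) (\<lambda>A. \<Sum>q<Q. ennreal (\<alpha> q) * indicator A (X q))"
    by (simp add: dirac_comb_def)
  also have "\<dots> = measure_of UNIV (sets borel) (emeasure ?E)"
  proof (rule measure_of_eq)
    show "sets borel \<subseteq> Pow UNIV" by auto
    fix A :: "'a set" assume "A \<in> sigma_sets UNIV (sets borel)"
    then have A: "A \<in> sets borel" by (metis sets.sigma_sets_eq space_borel)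
    have "emeasure ?E A = emeasure (density (count_space {..<Q}) (\<lambda>q. ennreal (\<alpha> q))) (X -` A \<inter> {..<Q})"
      using A by (subst emeasure_distr) auto
    also have "\<dots> = (\<Sum>q<Q. ennreal (\<alpha> q) * indicator (X -` A \<inter> {..<Q}) q)"
      by (simp add: emeasure_density nn_integral_count_space_finite)
    also have "\<dots> = (\<Sum>q<Q. ennreal (\<alpha> q) * indicator A (X q))"
      by (intro sum.cong) (auto simp: indicator_def)
    finally show "(\<Sum>q<Q. ennreal (\<alpha> q) * indicator A (X q)) = emeasure ?E A" by simp
  qed
  also have "\<dots> = ?E"
    using measure_of_of_measure[of ?E] by simp
  finally show ?thesis .
qed

lemma integral_dirac_comb:
  fixes X :: "nat \<Rightarrow> 'a::topological_space" and f :: "'a \<Rightarrow> real"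
  assumes "\<forall>q<Q. \<alpha> q \<ge> 0" and "f \<in> borel_measurable borel"
  shows "(\<integral>x. f x \<partial>fst (dirac_comb Q \<alpha> X)) = (\<Sum>q<Q. \<alpha> q * f (X q))"
proof -
  have "(\<integral>x. f x \<partial>fst (dirac_comb Q \<alpha> X)) =
      (\<integral>q. f (X q) \<partial>density (count_space {..<Q}) (\<lambda>q. ennreal (\<alpha> q)))"
    unfolding fst_dirac_comb using assms(2) by (simp add: integral_distr)
  also have "\<dots> = (\<integral>q. \<alpha> q *\<^sub>R f (X q) \<partial>count_space {..<Q})"
    using assms(1) by (subst integral_density) (auto simp: AE_count_space)
  also have "\<dots> = (\<Sum>q<Q. \<alpha> q * f (X q))"
    by (simp add: lebesgue_integral_count_space_finite)
  finally show ?thesis .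
qed

lemma quadratic_form_nonneg_imp_Cauchy_Schwarz:
  fixes a b d :: real
  assumes nonneg: "\<And>s t. 0 \<le> s\<^sup>2 * a + 2 * s * t * b + t\<^sup>2 * d"
  shows "b\<^sup>2 \<le> a * d"
proof (cases "d > 0")
  case True
  have "0 \<le> d\<^sup>2 * a + 2 * d * (-b) * b + (-b)\<^sup>2 * d" by (rule nonneg)
  then have "0 \<le> d * (a * d - b\<^sup>2)" by (simp add: power2_eq_square algebra_simps)
  then show ?thesis using True by (simp add: zero_le_mult_iff)
next
  case False
  have "0 \<le> 0\<^sup>2 * a + 2 * 0 * 1 * b + 1\<^sup>2 * d" by (rule nonneg)
  then have d: "d = 0" using False by simp
  show ?thesis
  proof (cases "b = 0")
    case True
    then show ?thesis using d by simp
  next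
    case False
    have "0 \<le> 1\<^sup>2 * a + 2 * 1 * (-(a+1)/(2*b)) * b + (-(a+1)/(2*b))\<^sup>2 * d" by (rule nonneg)
    then show ?thesis using False d by (simp add: field_simps)
  qed
qed

lemma kz_eq:
  assumes "\<forall>x y. h x y = k x x + k y y - 2 * k x y"
  shows "kz h z0 x y = k x y - k x z0 - k y z0 + k z0 z0"
  using assms unfolding kz_def by (simp add: field_simps)

text \<open>The quadratic form of \<open>k\<^sub>z\<^sub>0\<close> at \<open>x, y\<close> is that of \<open>k\<close> at \<open>x, y, z0\<close> with coefficients
  \<open>s, t, -(s + t)\<close>.\<close>
lemma kz_quadratic_form_nonneg:
  assumes pd: "pos_def_kernel k" and h_k: "\<forall>x y. h x y = k x x + k y y - 2 * k x y"
  shows "0 \<le> s\<^sup>2 * kz h z0 x x + 2 * s * t * kz h z0 x y + t\<^sup>2 * kz h z0 y y"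
proof -
  define c where "c = (\<lambda>i::nat. if i = 0 then s else if i = 1 then t else -(s+t))"
  define p where "p = (\<lambda>i::nat. if i = 0 then x else if i = 1 then y else z0)"
  have sym: "\<And>a b. k a b = k b a" using pd unfolding pos_def_kernel_def by blast
  have "0 \<le> (\<Sum>i<3. \<Sum>j<3. c i * c j * k (p i) (p j))"
    using pd unfolding pos_def_kernel_def by blast
  also have "(\<Sum>i<3. \<Sum>j<3. c i * c j * k (p i) (p j)) =
      s\<^sup>2 * kz h z0 x x + 2 * s * t * kz h z0 x y + t\<^sup>2 * kz h z0 y y"
    unfolding kz_eq[OF h_k] c_def p_def
    by (simp add: numeral_3_eq_3 sym[of z0 x] sym[of z0 y] sym[of y x] power2_eq_square algebra_simps)
  finally show ?thesis .
qed

lemma continuous_on_kz: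
  assumes "continuous_on UNIV (\<lambda>(x, y). h x y)"
  shows "continuous_on UNIV (\<lambda>(x, y). kz h z0 x y)"
proof -
  have h: "continuous_on UNIV (\<lambda>p. h (fst p) (snd p))"
    using assms by (simp add: case_prod_beta')
  have "continuous_on UNIV (\<lambda>p. h (fst p) z0)" "continuous_on UNIV (\<lambda>p. h (snd p) z0)"
    using continuous_on_compose2[OF h continuous_on_Pair[OF continuous_on_fst[OF continuous_on_id]
          continuous_on_const] subset_UNIV]
      continuous_on_compose2[OF h continuous_on_Pair[OF continuous_on_snd[OF continuous_on_id]
          continuous_on_const] subset_UNIV]
    by simp_all
  with h have "continuous_on UNIV (\<lambda>p. (h (fst p) z0 + h (snd p) z0 - h (fst p) (snd p)) / 2)"
    by (intro continuous_intros) auto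
  then show ?thesis unfolding kz_def by (simp add: case_prod_beta')
qed

section \<open>Lower limits and compactness\<close>

lemma bounded_components_convergent_subseq:
  fixes f :: "nat \<Rightarrow> nat \<Rightarrow> 'a::heine_borel"
  assumes "\<And>q. q < Q \<Longrightarrow> bounded (range (\<lambda>n. f n q))"
  shows "\<exists>l r. strict_mono r \<and> (\<forall>q<Q. (\<lambda>n. f (r n) q) \<longlonglongrightarrow> l q)"
proof -
  obtain l r where r: "strict_mono r"
    and conv: "\<And>\<epsilon>. \<epsilon> > 0 \<Longrightarrow> eventually (\<lambda>n. \<forall>q\<in>{..<Q}. dist (f (r n) q) (l q) < \<epsilon>) sequentially"
    using compact_lemma_general[where f=f and proj="\<lambda>x q. x q" and unproj=id and basis="{..<Q}"] assms
    by (auto simp: image_image) (meson order_refl)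
  have "(\<lambda>n. f (r n) q) \<longlonglongrightarrow> l q" if "q < Q" for q
  proof (rule tendstoI)
    fix \<epsilon> :: real assume "\<epsilon> > 0"
    from conv[OF this] show "eventually (\<lambda>n. dist (f (r n) q) (l q) < \<epsilon>) sequentially"
      by eventually_elim (use that in auto)
  qed
  with r show ?thesis by blast
qed

text \<open>\<open>liminf_ge a L\<close> means \<open>L \<le> liminf a\<close>; stated this way to stay within the reals.\<close>
definition liminf_ge :: "(nat \<Rightarrow> real) \<Rightarrow> real \<Rightarrow> bool" where
  "liminf_ge a L \<longleftrightarrow> (\<forall>\<epsilon>>0. eventually (\<lambda>n. L - \<epsilon> \<le> a n) sequentially)"

lemma tendsto_imp_liminf_ge: "a \<longlonglongrightarrow> L \<Longrightarrow> liminf_ge a L"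
  unfolding liminf_ge_def
proof safe
  fix \<epsilon> :: real assume "a \<longlonglongrightarrow> L" "\<epsilon> > 0"
  then have "eventually (\<lambda>n. dist (a n) L < \<epsilon>) sequentially" by (rule tendstoD)
  then show "eventually (\<lambda>n. L - \<epsilon> \<le> a n) sequentially"
    by eventually_elim (auto simp: dist_real_def)
qed

lemma liminf_ge_mono: "liminf_ge b L \<Longrightarrow> (\<And>n. b n \<le> a n) \<Longrightarrow> liminf_ge a L"
  unfolding liminf_ge_def by (metis (mono_tags, lifting) eventually_mono order_trans)

lemma liminf_ge_add: "liminf_ge a L \<Longrightarrow> liminf_ge b M \<Longrightarrow> liminf_ge (\<lambda>n. a n + b n) (L + M)"
  unfolding liminf_ge_def
proof safe
  fix \<epsilon> :: real
  assume "\<forall>\<epsilon>>0. eventually (\<lambda>n. L - \<epsilon> \<le> a n) sequentially"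
    and "\<forall>\<epsilon>>0. eventually (\<lambda>n. M - \<epsilon> \<le> b n) sequentially" and "\<epsilon> > 0"
  then have "eventually (\<lambda>n. L - \<epsilon>/2 \<le> a n) sequentially"
    and "eventually (\<lambda>n. M - \<epsilon>/2 \<le> b n) sequentially"
    by auto
  then show "eventually (\<lambda>n. L + M - \<epsilon> \<le> a n + b n) sequentially"
    by eventually_elim auto
qed

lemma liminf_ge_sum:
  "finite I \<Longrightarrow> (\<And>i. i \<in> I \<Longrightarrow> liminf_ge (a i) (L i)) \<Longrightarrow>
    liminf_ge (\<lambda>n. \<Sum>i\<in>I. a i n) (\<Sum>i\<in>I. L i)"
proof (induction I rule: finite_induct)
  case empty
  then show ?case by (simp add: liminf_ge_def)
next
  case (insert x F)
  then show ?case by (simp add: liminf_ge_add)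
qed

lemma liminf_ge_imp_le:
  assumes "liminf_ge a L" "b \<longlonglongrightarrow> v" "\<And>n. a n \<le> b n"
  shows "L \<le> v"
proof (rule field_le_epsilon)
  fix \<epsilon> :: real assume "\<epsilon> > 0"
  with assms have "eventually (\<lambda>n. L - \<epsilon> \<le> b n) sequentially"
    unfolding liminf_ge_def by (metis (mono_tags, lifting) eventually_mono order_trans)
  from tendsto_lowerbound[OF assms(2) this] show "L \<le> v + \<epsilon>" by simp
qed

definition scaled_simplex :: "nat \<Rightarrow> real \<Rightarrow> (nat \<Rightarrow> real) set" where
  "scaled_simplex Q m = {\<alpha>. (\<forall>q<Q. \<alpha> q \<ge> 0) \<and> (\<Sum>q<Q. \<alpha> q) = m}"

lemma scaled_simplex_le: "\<alpha> \<in> scaled_simplex Q m \<Longrightarrow> q < Q \<Longrightarrow> \<alpha> q \<le> m"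
  using member_le_sum[of q "{..<Q}" \<alpha>] by (auto simp: scaled_simplex_def)

lemma limit_in_scaled_simplex:
  assumes "\<And>n. A n \<in> scaled_simplex Q m" "\<And>q. q < Q \<Longrightarrow> (\<lambda>n. A n q) \<longlonglongrightarrow> L q"
  shows "L \<in> scaled_simplex Q m"
proof -
  have "L q \<ge> 0" if "q < Q" for q
    using LIMSEQ_le_const[OF assms(2)[OF that], of 0] assms(1) that by (auto simp: scaled_simplex_def)
  moreover have "(\<lambda>n. \<Sum>q<Q. A n q) \<longlonglongrightarrow> (\<Sum>q<Q. L q)"
    by (intro tendsto_sum assms(2)) auto
  then have "(\<Sum>q<Q. L q) = m"
    using assms(1) LIMSEQ_unique tendsto_const by (fastforce simp: scaled_simplex_def)
  ultimately show ?thesis by (simp add: scaled_simplex_def)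
qed

section \<open>Potentials of measures\<close>

locale coercive_kernel =
  fixes K :: "'a::{real_normed_vector, heine_borel} \<Rightarrow> 'a \<Rightarrow> real" and C :: real
  assumes continuous: "continuous_on UNIV (\<lambda>(x, y). K x y)"
    and diag_nonneg: "\<And>x. K x x \<ge> 0"
    and Cauchy_Schwarz: "\<And>x y. (K x y)\<^sup>2 \<le> K x x * K y y"
    and bounded_column: "\<And>y. \<exists>b. \<forall>x. \<bar>K x y\<bar> \<le> b"
    and diag_at_top: "filterlim (\<lambda>x. K x x) at_top at_infinity"
    and lower_bound: "\<And>x y. K x y \<ge> C"
begin

lemma abs_le_sqrt_diag: "\<bar>K x y\<bar> \<le> sqrt (K x x) * sqrt (K y y)"
proof -
  have "\<bar>K x y\<bar> = sqrt ((K x y)\<^sup>2)" by simp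
  also have "\<dots> \<le> sqrt (K x x * K y y)" using Cauchy_Schwarz by (rule real_sqrt_le_mono)
  finally show ?thesis by (simp add: real_sqrt_mult)
qed

lemma tendsto_kernel:
  assumes "(f \<longlongrightarrow> a) F" "(g \<longlongrightarrow> b) F"
  shows "((\<lambda>n. K (f n) (g n)) \<longlongrightarrow> K a b) F"
proof -
  have "isCont (\<lambda>(x, y). K x y) (a, b)"
    using continuous continuous_on_eq_continuous_at open_UNIV by blast
  from isCont_tendsto_compose[OF this tendsto_Pair[OF assms]] show ?thesis by simp
qed

lemma continuous_on_kernel_left: "continuous_on UNIV (\<lambda>x. K x y)"
  by (intro continuous_at_imp_continuous_on ballI continuous_at_sequentially[THEN iffD2])
    (auto simp: o_def intro!: tendsto_kernel)

lemma continuous_on_kernel_right: "continuous_on UNIV (\<lambda>y. K x y)"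
  by (intro continuous_at_imp_continuous_on ballI continuous_at_sequentially[THEN iffD2])
    (auto simp: o_def intro!: tendsto_kernel)

lemma borel_measurable_kernel_right: "sets N = sets borel \<Longrightarrow> (\<lambda>y. K x y) \<in> borel_measurable N"
  using borel_measurable_continuous_onI[OF continuous_on_kernel_right] measurable_cong_sets[of N borel]
  by auto

definition potential :: "'a measure \<Rightarrow> 'a \<Rightarrow> real" where
  "potential N x = (\<integral>y. K x y \<partial>N)"

definition moment :: "'a measure \<Rightarrow> real" where
  "moment N = (\<integral>y. sqrt (K y y) \<partial>N)"

context
  fixes N :: "'a measure"
  assumes sets_N: "sets N = sets borel" and integrable_N: "integrable N (\<lambda>y. sqrt (K y y))"
begin

lemma integrable_kernel: "integrable N (\<lambda>y. K x y)"
proof (rule Bochner_Integration.integrable_bound)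
  show "integrable N (\<lambda>y. sqrt (K x x) * sqrt (K y y))" using integrable_N by simp
  show "(\<lambda>y. K x y) \<in> borel_measurable N" by (rule borel_measurable_kernel_right[OF sets_N])
  show "AE y in N. norm (K x y) \<le> norm (sqrt (K x x) * sqrt (K y y))"
    using abs_le_sqrt_diag diag_nonneg by auto
qed

lemma abs_potential_le: "\<bar>potential N x\<bar> \<le> moment N * sqrt (K x x)"
proof -
  have "\<bar>potential N x\<bar> \<le> (\<integral>y. \<bar>K x y\<bar> \<partial>N)"
    unfolding potential_def using integral_norm_bound[of N "\<lambda>y. K x y"] by simp
  also have "\<dots> \<le> (\<integral>y. sqrt (K x x) * sqrt (K y y) \<partial>N)"
    by (intro integral_mono integrable_kernel integrable_abs) (use integrable_N abs_le_sqrt_diag in auto)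
  finally show ?thesis unfolding moment_def by (simp add: mult.commute)
qed

lemma tendsto_potential:
  assumes "xs \<longlonglongrightarrow> x"
  shows "(\<lambda>n. potential N (xs n)) \<longlonglongrightarrow> potential N x"
proof -
  have "(\<lambda>n. sqrt (K (xs n) (xs n))) \<longlonglongrightarrow> sqrt (K x x)"
    by (intro tendsto_intros tendsto_kernel assms)
  then have "Bseq (\<lambda>n. sqrt (K (xs n) (xs n)))" by (intro convergent_imp_Bseq convergentI)
  then obtain B where B: "\<And>n. norm (sqrt (K (xs n) (xs n))) \<le> B" unfolding Bseq_def by auto
  show ?thesis unfolding potential_def
  proof (rule integral_dominated_convergence[where w="\<lambda>y. B * sqrt (K y y)"])
    show "(\<lambda>y. K x y) \<in> borel_measurable N" "\<And>n. (\<lambda>y. K (xs n) y) \<in> borel_measurable N"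
      by (auto intro!: borel_measurable_kernel_right sets_N)
    show "integrable N (\<lambda>y. B * sqrt (K y y))" using integrable_N by simp
    show "AE y in N. (\<lambda>n. K (xs n) y) \<longlonglongrightarrow> K x y"
      by (intro AE_I2 tendsto_kernel assms tendsto_const)
    show "AE y in N. norm (K (xs n) y) \<le> B * sqrt (K y y)" for n
    proof (intro AE_I2)
      fix y
      have "norm (K (xs n) y) \<le> sqrt (K (xs n) (xs n)) * sqrt (K y y)" using abs_le_sqrt_diag by simp
      also have "\<dots> \<le> B * sqrt (K y y)"
        using B[of n] diag_nonneg by (intro mult_right_mono) auto
      finally show "norm (K (xs n) y) \<le> B * sqrt (K y y)" .
    qed
  qed
qed

lemma continuous_on_potential: "continuous_on UNIV (potential N)"
  by (intro continuous_at_imp_continuous_on ballI continuous_at_sequentially[THEN iffD2])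
    (auto simp: o_def intro!: tendsto_potential)

text \<open>Dominated convergence with the dominating function \<open>sqrt (K y y)\<close>; the pointwise
  limit vanishes because each column \<open>K \<cdot> y\<close> is bounded.\<close>
lemma potential_over_sqrt_diag_LIMSEQ:
  assumes s: "filterlim (\<lambda>n. sqrt (K (xs n) (xs n))) at_top sequentially"
  shows "(\<lambda>n. potential N (xs n) / sqrt (K (xs n) (xs n))) \<longlonglongrightarrow> 0"
proof -
  define s where "s n = sqrt (K (xs n) (xs n))" for n
  have "(\<lambda>n. (\<integral>y. K (xs n) y / s n \<partial>N)) \<longlonglongrightarrow> (\<integral>y. 0 \<partial>N)"
  proof (rule integral_dominated_convergence[where w="\<lambda>y. sqrt (K y y)"])
    show "(\<lambda>y. 0::real) \<in> borel_measurable N" by simp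
    show "\<And>n. (\<lambda>y. K (xs n) y / s n) \<in> borel_measurable N"
      by (intro borel_measurable_divide borel_measurable_kernel_right sets_N borel_measurable_const)
    show "integrable N (\<lambda>y. sqrt (K y y))" by (rule integrable_N)
    show "AE y in N. (\<lambda>n. K (xs n) y / s n) \<longlonglongrightarrow> 0"
    proof (intro AE_I2)
      fix y
      obtain b where b: "\<And>x. \<bar>K x y\<bar> \<le> b" using bounded_column by metis
      have "(\<lambda>n. b / s n) \<longlonglongrightarrow> 0"
        using s unfolding s_def by (intro tendsto_divide_0[OF tendsto_const] filterlim_at_top_imp_at_infinity)
      moreover have "eventually (\<lambda>n. s n > 0) sequentially"
        using s unfolding s_def filterlim_at_top_dense by blast
      then have "eventually (\<lambda>n. norm (K (xs n) y / s n) \<le> b / s n) sequentially"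
        by eventually_elim (use b in \<open>simp add: abs_div divide_right_mono\<close>)
      ultimately show "(\<lambda>n. K (xs n) y / s n) \<longlonglongrightarrow> 0"
        by (rule Lim_null_comparison[rotated])
    qed
    show "AE y in N. norm (K (xs n) y / s n) \<le> sqrt (K y y)" for n
    proof (intro AE_I2)
      fix y
      have "\<bar>K (xs n) y\<bar> \<le> s n * sqrt (K y y)" using abs_le_sqrt_diag s_def by simp
      moreover have "s n \<ge> 0" unfolding s_def using diag_nonneg by simp
      ultimately show "norm (K (xs n) y / s n) \<le> sqrt (K y y)"
        using diag_nonneg[of y] by (cases "s n = 0") (auto simp: abs_div pos_divide_le_eq mult.commute)
    qed
  qed
  then show ?thesis unfolding potential_def s_def by simp
qed

lemma potential_little_o:
  assumes "\<epsilon> > 0"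
  shows "eventually (\<lambda>x. \<bar>potential N x\<bar> \<le> \<epsilon> * sqrt (K x x)) at_infinity"
proof (rule ccontr)
  assume "\<not> ?thesis"
  then have "\<forall>n::nat. \<exists>x. norm x \<ge> real n \<and> \<bar>potential N x\<bar> > \<epsilon> * sqrt (K x x)"
    by (auto simp: eventually_at_infinity not_le)
  then obtain xs where xs: "\<And>n. norm (xs n) \<ge> real n"
    and big: "\<And>n. \<bar>potential N (xs n)\<bar> > \<epsilon> * sqrt (K (xs n) (xs n))"
    by metis
  have "filterlim (\<lambda>n. norm (xs n)) at_top sequentially"
    by (rule filterlim_at_top_mono[OF filterlim_real_sequentially]) (use xs in auto)
  then have "filterlim xs at_infinity sequentially"
    by (simp add: filterlim_at_infinity_conv_norm_at_top)
  then have s: "filterlim (\<lambda>n. sqrt (K (xs n) (xs n))) at_top sequentially"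
    by (intro filterlim_compose[OF sqrt_at_top] filterlim_compose[OF diag_at_top])
  have "eventually (\<lambda>n. norm (potential N (xs n) / sqrt (K (xs n) (xs n))) < \<epsilon>) sequentially"
    using tendstoD[OF potential_over_sqrt_diag_LIMSEQ[OF s] assms] by (simp add: dist_norm)
  moreover have "eventually (\<lambda>n. sqrt (K (xs n) (xs n)) > 0) sequentially"
    using s unfolding filterlim_at_top_dense by blast
  ultimately obtain n where "\<bar>potential N (xs n)\<bar> < \<epsilon> * sqrt (K (xs n) (xs n))"
    by (auto simp: abs_div divide_less_eq dest: eventually_happens'[OF sequentially_bot, OF eventually_conj])
  with big[of n] show False by simp
qed

end

lemma sinner_dirac_comb_self:
  assumes "\<forall>q<Q. \<alpha> q \<ge> 0"
  shows "sinner K (dirac_comb Q \<alpha> X) (dirac_comb Q \<alpha> X) = (\<Sum>p<Q. \<Sum>q<Q. \<alpha> p * \<alpha> q * K (X p) (X q))"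
proof -
  have "dbl_int K (fst (dirac_comb Q \<alpha> X)) (fst (dirac_comb Q \<alpha> X)) =
      (\<integral>x. (\<Sum>q<Q. \<alpha> q * K x (X q)) \<partial>fst (dirac_comb Q \<alpha> X))"
    unfolding dbl_int_def
    by (simp only: integral_dirac_comb[OF assms borel_measurable_continuous_onI[OF continuous_on_kernel_right]])
  also have "\<dots> = (\<Sum>p<Q. \<alpha> p * (\<Sum>q<Q. \<alpha> q * K (X p) (X q)))"
    by (intro integral_dirac_comb assms borel_measurable_continuous_onI continuous_intros
        continuous_on_kernel_left)
  finally show ?thesis
    unfolding sinner_def by (simp add: dirac_comb_def dbl_int_def sum_distrib_left mult.assoc)
qed

lemma sinner_dirac_comb:
  assumes "\<forall>q<Q. \<alpha> q \<ge> 0"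
    and "sets (fst \<eta>) = sets borel" "integrable (fst \<eta>) (\<lambda>y. sqrt (K y y))"
    and "sets (snd \<eta>) = sets borel" "integrable (snd \<eta>) (\<lambda>y. sqrt (K y y))"
  shows "sinner K (dirac_comb Q \<alpha> X) \<eta> =
    (\<Sum>q<Q. \<alpha> q * potential (fst \<eta>) (X q)) - (\<Sum>q<Q. \<alpha> q * potential (snd \<eta>) (X q))"
proof -
  have "dbl_int K (fst (dirac_comb Q \<alpha> X)) N = (\<Sum>q<Q. \<alpha> q * potential N (X q))"
    if "sets N = sets borel" "integrable N (\<lambda>y. sqrt (K y y))" for N
    unfolding dbl_int_def potential_def[symmetric]
    by (intro integral_dirac_comb assms(1) borel_measurable_continuous_onI continuous_on_potential that)
  with assms(2-5) show ?thesis
    unfolding sinner_def by (simp add: dirac_comb_def dbl_int_def)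
qed

end

section \<open>Existence of an optimal quantization\<close>

text \<open>\<open>g\<close> stands for the potential of \<open>\<eta>\<close>, so that \<open>d(\<delta>\<^sub>\<alpha>\<^sub>,\<^sub>X, \<eta>)\<^sup>2 = energy Q \<alpha> X + \<parallel>\<eta>\<parallel>\<^sup>2\<close>.\<close>
locale quantization_energy = coercive_kernel K C
  for K :: "'a::{real_normed_vector, heine_borel} \<Rightarrow> 'a \<Rightarrow> real" and C :: real +
  fixes g :: "'a \<Rightarrow> real" and c :: real
  assumes continuous_g: "continuous_on UNIV g"
    and abs_g_le: "\<And>x. \<bar>g x\<bar> \<le> c * sqrt (K x x)"
    and g_little_o: "\<And>\<epsilon>. \<epsilon> > 0 \<Longrightarrow> eventually (\<lambda>x. \<bar>g x\<bar> \<le> \<epsilon> * sqrt (K x x)) at_infinity"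
begin

definition energy :: "nat \<Rightarrow> (nat \<Rightarrow> real) \<Rightarrow> (nat \<Rightarrow> 'a) \<Rightarrow> real" where
  "energy Q \<alpha> X = (\<Sum>p<Q. \<Sum>q<Q. \<alpha> p * \<alpha> q * K (X p) (X q)) - 2 * (\<Sum>q<Q. \<alpha> q * g (X q))"

definition atom_energy :: "real \<Rightarrow> 'a \<Rightarrow> real" where
  "atom_energy a x = a\<^sup>2 * K x x - 2 * a * g x"

lemma energy_split:
  "energy Q \<alpha> X = (\<Sum>q<Q. atom_energy (\<alpha> q) (X q))
     + (\<Sum>p<Q. \<Sum>q\<in>{..<Q}-{p}. \<alpha> p * \<alpha> q * K (X p) (X q))"
proof -
  have "(\<Sum>q<Q. \<alpha> p * \<alpha> q * K (X p) (X q)) =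
      \<alpha> p * \<alpha> p * K (X p) (X p) + (\<Sum>q\<in>{..<Q}-{p}. \<alpha> p * \<alpha> q * K (X p) (X q))" if "p < Q" for p
    using that by (subst sum.remove[of _ p]) auto
  then have "(\<Sum>p<Q. \<Sum>q<Q. \<alpha> p * \<alpha> q * K (X p) (X q)) =
      (\<Sum>p<Q. \<alpha> p * \<alpha> p * K (X p) (X p) + (\<Sum>q\<in>{..<Q}-{p}. \<alpha> p * \<alpha> q * K (X p) (X q)))"
    by (intro sum.cong) auto
  then show ?thesis
    unfolding energy_def atom_energy_def
    by (simp add: sum.distrib sum_subtractf sum_distrib_left power2_eq_square algebra_simps)
qed

lemma atom_energy_ge_square:
  assumes "a \<ge> 0" "\<bar>g x\<bar> \<le> e * sqrt (K x x)"
  shows "(a * sqrt (K x x) - e)\<^sup>2 - e\<^sup>2 \<le> atom_energy a x"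
proof -
  define u where "u = sqrt (K x x)"
  have "K x x = u\<^sup>2" unfolding u_def using diag_nonneg by simp
  moreover have "a * g x \<le> a * (e * u)" using assms unfolding u_def by (intro mult_left_mono) auto
  ultimately show ?thesis
    unfolding atom_energy_def u_def[symmetric] by (simp add: power2_eq_square algebra_simps)
qed

lemma atom_energy_ge: "a \<ge> 0 \<Longrightarrow> - c\<^sup>2 \<le> atom_energy a x"
  using atom_energy_ge_square[OF _ abs_g_le, of a x] zero_le_power2[of "a * sqrt (K x x) - c"]
  by linarith

lemma diag_le_of_atom_energy_le:
  assumes "0 < a0" "a0 \<le> a" "atom_energy a x \<le> T"
  shows "K x x \<le> ((c + sqrt (T + c\<^sup>2)) / a0)\<^sup>2"
proof -
  define u where "u = sqrt (K x x)"
  have u: "u \<ge> 0" "K x x = u\<^sup>2" unfolding u_def using diag_nonneg by simp_all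
  have "(a * u - c)\<^sup>2 \<le> T + c\<^sup>2"
    using atom_energy_ge_square[OF _ abs_g_le, of a x] assms unfolding u_def by linarith
  then have "a * u \<le> c + sqrt (T + c\<^sup>2)"
    using real_le_rsqrt by fastforce
  moreover have "a0 * u \<le> a * u" using assms u by (intro mult_right_mono) auto
  ultimately have "u \<le> (c + sqrt (T + c\<^sup>2)) / a0" using assms(1) by (simp add: field_simps mult.commute)
  then show ?thesis using u by (simp add: power_mono)
qed

lemma atom_positions_bounded:
  assumes "a \<longlonglongrightarrow> l" "l > 0" "\<And>n. atom_energy (a n) (x n) \<le> T"
  shows "\<exists>R. eventually (\<lambda>n. norm (x n) \<le> R) sequentially"
proof -
  define U where "U = ((c + sqrt (T + c\<^sup>2)) / (l/2))\<^sup>2"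
  obtain R where R: "\<And>y. R \<le> norm y \<Longrightarrow> U + 1 \<le> K y y"
    using diag_at_top unfolding filterlim_at_top eventually_at_infinity by blast
  have "eventually (\<lambda>n. l/2 < a n) sequentially"
    using order_tendstoD(1)[OF assms(1), of "l/2"] assms(2) by simp
  then have "eventually (\<lambda>n. norm (x n) \<le> R) sequentially"
  proof eventually_elim
    case (elim n)
    then have "K (x n) (x n) \<le> U"
      unfolding U_def using assms by (intro diag_le_of_atom_energy_le) auto
    then show ?case using R[of "x n"] by linarith
  qed
  then show ?thesis by blast
qed

lemma cross_energy_ge:
  fixes Q :: nat
  assumes "\<forall>q<Q. \<alpha> q \<ge> 0"
  shows "- \<bar>C\<bar> * (\<Sum>q<Q. \<alpha> q)\<^sup>2 \<le> (\<Sum>p<Q. \<Sum>q\<in>{..<Q}-{p}. \<alpha> p * \<alpha> q * K (X p) (X q))"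
proof -
  have "(\<Sum>p<Q. \<Sum>q\<in>{..<Q}-{p}. \<alpha> p * \<alpha> q) \<le> (\<Sum>p<Q. \<Sum>q<Q. \<alpha> p * \<alpha> q)"
    by (intro sum_mono sum_mono2) (use assms in auto)
  also have "\<dots> = (\<Sum>q<Q. \<alpha> q)\<^sup>2"
    by (simp add: power2_eq_square sum_product)
  finally have "- \<bar>C\<bar> * (\<Sum>q<Q. \<alpha> q)\<^sup>2 \<le> - \<bar>C\<bar> * (\<Sum>p<Q. \<Sum>q\<in>{..<Q}-{p}. \<alpha> p * \<alpha> q)"
    by (rule mult_left_mono_neg) simp_all
  also have "\<dots> = (\<Sum>p<Q. \<Sum>q\<in>{..<Q}-{p}. - \<bar>C\<bar> * (\<alpha> p * \<alpha> q))"
    by (simp add: sum_distrib_left)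
  also have "\<dots> \<le> (\<Sum>p<Q. \<Sum>q\<in>{..<Q}-{p}. \<alpha> p * \<alpha> q * K (X p) (X q))"
  proof (intro sum_mono)
    fix p q assume "p \<in> {..<Q}" "q \<in> {..<Q} - {p}"
    then have "\<alpha> p * \<alpha> q \<ge> 0" using assms by auto
    moreover have "- \<bar>C\<bar> \<le> K (X p) (X q)" using lower_bound[of "X p" "X q"] by linarith
    ultimately show "- \<bar>C\<bar> * (\<alpha> p * \<alpha> q) \<le> \<alpha> p * \<alpha> q * K (X p) (X q)"
      by (metis mult.commute mult_left_mono)
  qed
  finally show ?thesis .
qed

lemma energy_ge_atom_energy:
  assumes "\<alpha> \<in> scaled_simplex Q m" "q0 < Q"
  shows "atom_energy (\<alpha> q0) (X q0) - real Q * c\<^sup>2 - \<bar>C\<bar> * m\<^sup>2 \<le> energy Q \<alpha> X"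
proof -
  have \<alpha>: "\<forall>q<Q. \<alpha> q \<ge> 0" "(\<Sum>q<Q. \<alpha> q) = m" using assms(1) by (auto simp: scaled_simplex_def)
  have "(\<Sum>q<Q. atom_energy (\<alpha> q) (X q)) =
      atom_energy (\<alpha> q0) (X q0) + (\<Sum>q\<in>{..<Q}-{q0}. atom_energy (\<alpha> q) (X q))"
    using assms(2) by (subst sum.remove[of _ q0]) auto
  moreover have "(\<Sum>q\<in>{..<Q}-{q0}. - c\<^sup>2) \<le> (\<Sum>q\<in>{..<Q}-{q0}. atom_energy (\<alpha> q) (X q))"
    by (intro sum_mono atom_energy_ge) (use \<alpha> in auto)
  moreover have "- real Q * c\<^sup>2 \<le> (\<Sum>q\<in>{..<Q}-{q0}. - c\<^sup>2)"
    using card_Diff1_le[of "{..<Q}" q0] by (simp add: mult_right_mono)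
  ultimately show ?thesis
    using energy_split[of Q \<alpha> X] cross_energy_ge[OF \<alpha>(1), of X, unfolded \<alpha>(2)] by linarith
qed

lemma tendsto_atom_energy:
  assumes "a \<longlonglongrightarrow> a'" "x \<longlonglongrightarrow> x'"
  shows "(\<lambda>n. atom_energy (a n) (x n)) \<longlonglongrightarrow> atom_energy a' x'"
proof -
  have "(\<lambda>n. g (x n)) \<longlonglongrightarrow> g x'"
    using continuous_g assms(2) continuous_on_eq_continuous_at isCont_tendsto_compose open_UNIV by blast
  then show ?thesis unfolding atom_energy_def by (intro tendsto_intros tendsto_kernel assms)
qed

text \<open>An atom whose weight vanishes contributes asymptotically nonnegative energy wherever its
  position goes: far out, because \<open>g\<close> is small against \<open>sqrt (K x x)\<close>; on a ball, because \<open>g\<close> is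
  bounded there.\<close>
lemma atom_energy_liminf_ge_zero:
  assumes "a \<longlonglongrightarrow> 0" "\<And>n. a n \<ge> 0"
  shows "liminf_ge (\<lambda>n. atom_energy (a n) (x n)) 0"
  unfolding liminf_ge_def
proof safe
  fix \<epsilon> :: real assume "\<epsilon> > 0"
  then obtain R where R: "\<And>y. norm y \<ge> R \<Longrightarrow> \<bar>g y\<bar> \<le> sqrt \<epsilon> * sqrt (K y y)"
    using g_little_o[of "sqrt \<epsilon>"] unfolding eventually_at_infinity by auto
  have "compact (g ` cball 0 R)"
    by (intro compact_continuous_image continuous_on_subset[OF continuous_g]) auto
  then obtain M where M: "M > 0" "\<And>y. y \<in> cball 0 R \<Longrightarrow> \<bar>g y\<bar> \<le> M"
    using compact_imp_bounded bounded_pos by (metis image_eqI real_norm_def)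
  have "eventually (\<lambda>n. a n < \<epsilon> / (2 * M)) sequentially"
    using order_tendstoD(2)[OF assms(1)] \<open>\<epsilon> > 0\<close> M by simp
  then show "eventually (\<lambda>n. 0 - \<epsilon> \<le> atom_energy (a n) (x n)) sequentially"
  proof eventually_elim
    case (elim n)
    show ?case
    proof (cases "norm (x n) \<ge> R")
      case True
      then have "(a n * sqrt (K (x n) (x n)) - sqrt \<epsilon>)\<^sup>2 - \<epsilon> \<le> atom_energy (a n) (x n)"
        using atom_energy_ge_square[OF assms(2)[of n] R] \<open>\<epsilon> > 0\<close> by simp
      then show ?thesis using zero_le_power2[of "a n * sqrt (K (x n) (x n)) - sqrt \<epsilon>"] by linarith
    next
      case False
      then have "\<bar>g (x n)\<bar> \<le> M" using M(2)[of "x n"] by simp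
      then have "g (x n) \<le> M" by (rule abs_le_D1)
      then have "a n * g (x n) \<le> a n * M" using assms(2)[of n] by (rule mult_left_mono)
      also have "\<dots> \<le> \<epsilon> / 2" using elim M by (simp add: field_simps)
      moreover have "0 \<le> (a n)\<^sup>2 * K (x n) (x n)" using diag_nonneg by simp
      ultimately show ?thesis unfolding atom_energy_def by linarith
    qed
  qed
qed

lemma cross_term_liminf_ge_zero:
  assumes "w \<longlonglongrightarrow> 0" "\<And>n. w n \<ge> 0"
  shows "liminf_ge (\<lambda>n. w n * K (x n) (y n)) 0"
proof (rule liminf_ge_mono)
  show "liminf_ge (\<lambda>n. - \<bar>C\<bar> * w n) 0"
    using tendsto_imp_liminf_ge[OF tendsto_mult_right_zero[OF assms(1)], of "- \<bar>C\<bar>"] by simp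
  show "- \<bar>C\<bar> * w n \<le> w n * K (x n) (y n)" for n
  proof -
    have "- \<bar>C\<bar> \<le> K (x n) (y n)" using lower_bound[of "x n" "y n"] by linarith
    from mult_left_mono[OF this assms(2)] show ?thesis by (simp add: mult.commute)
  qed
qed

text \<open>Nothing is assumed about atoms of vanishing limiting weight: they may escape to infinity.\<close>
lemma energy_liminf_ge:
  fixes Q :: nat
  assumes nonneg: "\<And>n q. q < Q \<Longrightarrow> A n q \<ge> 0"
    and weights: "\<And>q. q < Q \<Longrightarrow> (\<lambda>n. A n q) \<longlonglongrightarrow> L q"
    and positions: "\<And>q. q < Q \<Longrightarrow> L q > 0 \<Longrightarrow> (\<lambda>n. X n q) \<longlonglongrightarrow> Xl q"
  shows "liminf_ge (\<lambda>n. energy Q (A n) (X n)) (energy Q L Xl)"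
proof -
  have L_nonneg: "L q \<ge> 0" if "q < Q" for q
    using LIMSEQ_le_const[OF weights[OF that], of 0] nonneg that by auto
  have atoms: "liminf_ge (\<lambda>n. atom_energy (A n q) (X n q)) (atom_energy (L q) (Xl q))"
    if "q < Q" for q
  proof (cases "L q > 0")
    case True
    with that show ?thesis
      by (intro tendsto_imp_liminf_ge tendsto_atom_energy weights positions)
  next
    case False
    with L_nonneg[OF that] have "L q = 0" by simp
    with weights[OF that] nonneg[OF that] show ?thesis
      using atom_energy_liminf_ge_zero[of "\<lambda>n. A n q"] by (simp add: atom_energy_def)
  qed
  have cross: "liminf_ge (\<lambda>n. A n p * A n q * K (X n p) (X n q)) (L p * L q * K (Xl p) (Xl q))"
    if "p < Q" "q < Q" for p q
  proof (cases "L p > 0 \<and> L q > 0")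
    case True
    with that show ?thesis
      by (intro tendsto_imp_liminf_ge tendsto_intros tendsto_kernel weights positions) auto
  next
    case False
    with L_nonneg that have "L p * L q = 0" by force
    moreover have "(\<lambda>n. A n p * A n q) \<longlonglongrightarrow> L p * L q"
      using that by (intro tendsto_mult weights)
    ultimately have "liminf_ge (\<lambda>n. A n p * A n q * K (X n p) (X n q)) 0"
      using nonneg that by (intro cross_term_liminf_ge_zero) auto
    with \<open>L p * L q = 0\<close> show ?thesis by auto
  qed
  show ?thesis
    unfolding energy_split by (intro liminf_ge_add liminf_ge_sum atoms cross) auto
qed

text \<open>By coercivity of the atom energy, atoms of positive limiting weight eventually stay in a
  ball; truncating the positions outside these balls makes compactness applicable.\<close>
lemma bounded_energy_convergent_subseq:
  fixes A :: "nat \<Rightarrow> nat \<Rightarrow> real"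
  assumes A: "\<And>n. A n \<in> scaled_simplex Q m" and bounded: "\<And>n. energy Q (A n) (X n) \<le> T"
  shows "\<exists>r L Xl. strict_mono r \<and> L \<in> scaled_simplex Q m \<and> (\<forall>q<Q. (\<lambda>n. A (r n) q) \<longlonglongrightarrow> L q) \<and>
    (\<forall>q<Q. L q > 0 \<longrightarrow> (\<lambda>n. X (r n) q) \<longlonglongrightarrow> Xl q)"
proof -
  have "bounded (range (\<lambda>n. A n q))" if "q < Q" for q
  proof (rule boundedI[of _ m])
    fix y assume "y \<in> range (\<lambda>n. A n q)"
    then obtain n where "y = A n q" by blast
    with A[of n] scaled_simplex_le[OF A that, of n] that show "norm y \<le> m"
      by (simp add: scaled_simplex_def)
  qed
  then obtain L r1 where r1: "strict_mono r1" and L: "\<And>q. q < Q \<Longrightarrow> (\<lambda>n. A (r1 n) q) \<longlonglongrightarrow> L q"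
    using bounded_components_convergent_subseq[of Q A] by blast
  have atom_le: "atom_energy (A n q) (X n q) \<le> T + real Q * c\<^sup>2 + \<bar>C\<bar> * m\<^sup>2" if "q < Q" for n q
    using energy_ge_atom_energy[OF A[of n] that, of "X n"] bounded[of n] by linarith
  have "\<exists>R. eventually (\<lambda>n. norm (X (r1 n) q) \<le> R) sequentially" if "q < Q" "L q > 0" for q
    using that atom_le by (intro atom_positions_bounded[OF L]) auto
  then obtain R where
    R: "\<And>q. q < Q \<Longrightarrow> L q > 0 \<Longrightarrow> eventually (\<lambda>n. norm (X (r1 n) q) \<le> R q) sequentially"
    by metis
  define Y where "Y n q = (if L q > 0 \<and> norm (X (r1 n) q) \<le> R q then X (r1 n) q else 0)" for n q
  have "bounded (range (\<lambda>n. Y n q))" for q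
    by (intro boundedI[of _ "\<bar>R q\<bar>"]) (auto simp: Y_def)
  then obtain Xl r2 where r2: "strict_mono r2" and Xl: "\<And>q. q < Q \<Longrightarrow> (\<lambda>n. Y (r2 n) q) \<longlonglongrightarrow> Xl q"
    using bounded_components_convergent_subseq[of Q Y] by blast
  have "(\<lambda>n. A (r1 (r2 n)) q) \<longlonglongrightarrow> L q" if "q < Q" for q
    using LIMSEQ_subseq_LIMSEQ[OF L[OF that] r2] by (simp add: o_def)
  moreover have "(\<lambda>n. X (r1 (r2 n)) q) \<longlonglongrightarrow> Xl q" if q: "q < Q" "L q > 0" for q
  proof (rule Lim_transform_eventually[OF Xl[OF q(1)]])
    obtain N where N: "\<And>n. n \<ge> N \<Longrightarrow> norm (X (r1 n) q) \<le> R q"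
      using R[OF q] unfolding eventually_sequentially by blast
    show "eventually (\<lambda>n. Y (r2 n) q = X (r1 (r2 n)) q) sequentially"
      unfolding eventually_sequentially
    proof (intro exI allI impI)
      fix n assume "n \<ge> N"
      then have "r2 n \<ge> N" using seq_suble[OF r2, of n] by linarith
      then show "Y (r2 n) q = X (r1 (r2 n)) q" using N q unfolding Y_def by auto
    qed
  qed
  ultimately show ?thesis
    using strict_mono_o[OF r1 r2] limit_in_scaled_simplex[OF A L]
    by (intro exI[of _ "r1 \<circ> r2"] exI[of _ L] exI[of _ Xl]) simp
qed

theorem energy_has_minimizer:
  assumes "Q \<ge> 1" "m \<ge> 0"
  shows "\<exists>\<alpha>\<in>scaled_simplex Q m. \<exists>X. \<forall>\<beta>\<in>scaled_simplex Q m. \<forall>Y. energy Q \<alpha> X \<le> energy Q \<beta> Y"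
proof -
  define V where "V = (\<lambda>(\<alpha>, X). energy Q \<alpha> X) ` (scaled_simplex Q m \<times> UNIV)"
  have "(\<lambda>q. if q = 0 then m else 0) \<in> scaled_simplex Q m"
    using assms by (auto simp: scaled_simplex_def sum.delta')
  then have "V \<noteq> {}" unfolding V_def by blast
  have "- c\<^sup>2 - real Q * c\<^sup>2 - \<bar>C\<bar> * m\<^sup>2 \<le> energy Q \<alpha> X" if "\<alpha> \<in> scaled_simplex Q m" for \<alpha> X
  proof -
    have "0 < Q" "\<alpha> 0 \<ge> 0" using assms that by (auto simp: scaled_simplex_def)
    then show ?thesis
      using energy_ge_atom_energy[OF that, of 0 X] atom_energy_ge[of "\<alpha> 0" "X 0"] by linarith
  qed
  then have "bdd_below V" unfolding V_def by (intro bdd_belowI2) auto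
  define v where "v = Inf V"
  have v_le: "v \<le> energy Q \<beta> Y" if "\<beta> \<in> scaled_simplex Q m" for \<beta> Y
    unfolding v_def using \<open>bdd_below V\<close> that by (intro cInf_lower) (auto simp: V_def)
  have "\<exists>\<alpha> X. \<alpha> \<in> scaled_simplex Q m \<and> energy Q \<alpha> X < v + inverse (real (Suc n))" for n
    using cInf_lessD[OF \<open>V \<noteq> {}\<close>, of "v + inverse (real (Suc n))"] unfolding v_def V_def by auto
  then obtain A X where A: "\<And>n. A n \<in> scaled_simplex Q m"
    and A_energy: "\<And>n. energy Q (A n) (X n) < v + inverse (real (Suc n))"
    by metis
  obtain r L Xl where r: "strict_mono r" and L: "L \<in> scaled_simplex Q m"
    and weights: "\<forall>q<Q. (\<lambda>n. A (r n) q) \<longlonglongrightarrow> L q"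
    and positions: "\<forall>q<Q. L q > 0 \<longrightarrow> (\<lambda>n. X (r n) q) \<longlonglongrightarrow> Xl q"
  proof -
    have "energy Q (A n) (X n) \<le> v + 1" for n
    proof -
      have "inverse (real (Suc n)) \<le> 1" by (simp add: inverse_le_1_iff)
      with A_energy[of n] show ?thesis by linarith
    qed
    with A bounded_energy_convergent_subseq[where A=A and X=X and T="v + 1"] that show ?thesis
      by blast
  qed
  have lsc: "liminf_ge (\<lambda>n. energy Q (A (r n)) (X (r n))) (energy Q L Xl)"
    using A weights positions by (intro energy_liminf_ge) (auto simp: scaled_simplex_def)
  have "(\<lambda>n. inverse (real (Suc (r n)))) \<longlonglongrightarrow> 0"
    using LIMSEQ_subseq_LIMSEQ[OF LIMSEQ_inverse_real_of_nat r] by (simp add: o_def)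
  then have lim: "(\<lambda>n. v + inverse (real (Suc (r n)))) \<longlonglongrightarrow> v"
    using tendsto_add[OF tendsto_const, of _ 0 sequentially v] by simp
  have "energy Q L Xl \<le> v"
    by (rule liminf_ge_imp_le[OF lsc lim less_imp_le[OF A_energy]])
  show ?thesis
  proof (intro bexI[OF _ L] exI[of _ Xl] ballI allI)
    fix \<beta> Y assume "\<beta> \<in> scaled_simplex Q m"
    with \<open>energy Q L Xl \<le> v\<close> v_le show "energy Q L Xl \<le> energy Q \<beta> Y"
      using order_trans by blast
  qed
qed

end

context coercive_kernel
begin

lemma quantization_energy_potential_diff:
  assumes "sets N1 = sets borel" "integrable N1 (\<lambda>y. sqrt (K y y))"
    and "sets N2 = sets borel" "integrable N2 (\<lambda>y. sqrt (K y y))"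
  shows "quantization_energy K C (\<lambda>x. potential N1 x - potential N2 x) (moment N1 + moment N2)"
proof (intro quantization_energy.intro quantization_energy_axioms.intro)
  show "coercive_kernel K C" by (rule coercive_kernel_axioms)
  show "continuous_on UNIV (\<lambda>x. potential N1 x - potential N2 x)"
    by (intro continuous_on_diff continuous_on_potential assms)
  show "\<bar>potential N1 x - potential N2 x\<bar> \<le> (moment N1 + moment N2) * sqrt (K x x)" for x
    using abs_potential_le[OF assms(1,2), of x] abs_potential_le[OF assms(3,4), of x]
    by (simp add: distrib_right abs_triangle_ineq4 order_trans add_mono)
  show "eventually (\<lambda>x. \<bar>potential N1 x - potential N2 x\<bar> \<le> \<epsilon> * sqrt (K x x)) at_infinity"
    if "\<epsilon> > 0" for \<epsilon>
  proof -
    from that have "\<epsilon>/2 > 0" by simp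
    from potential_little_o[OF assms(1,2) this] potential_little_o[OF assms(3,4) this]
    show ?thesis by eventually_elim auto
  qed
qed

end

lemma coercive_kernel_kz:
  fixes h k :: "'a::{real_normed_vector, heine_borel} \<Rightarrow> 'a \<Rightarrow> real"
  assumes h_nonneg: "\<forall>x y. h x y \<ge> 0"
    and h_cont: "continuous_on UNIV (\<lambda>(x, y). h x y)"
    and k_pd: "pos_def_kernel k"
    and h_k: "\<forall>x y. h x y = k x x + k y y - 2 * k x y"
    and k_diag: "filterlim (\<lambda>x. k x x) at_top at_infinity"
    and k_bdd: "\<forall>y. \<exists>b. \<forall>x. \<bar>k x y\<bar> \<le> b"
    and k_lower: "\<forall>x y. k x y \<ge> C_L"
  shows "\<exists>C. coercive_kernel (kz h z0) C"
proof -
  obtain b0 where b0: "\<And>x. \<bar>k x z0\<bar> \<le> b0" using k_bdd by metis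
  note kz = kz_eq[OF h_k]
  have "coercive_kernel (kz h z0) (2 * C_L - 2 * b0)"
  proof
    show "continuous_on UNIV (\<lambda>(x, y). kz h z0 x y)" by (rule continuous_on_kz[OF h_cont])
    show "kz h z0 x x \<ge> 0" for x
    proof -
      have "h x x = 0" using h_k by simp
      with h_nonneg show ?thesis by (simp add: kz_def)
    qed
    show "(kz h z0 x y)\<^sup>2 \<le> kz h z0 x x * kz h z0 y y" for x y
      by (rule quadratic_form_nonneg_imp_Cauchy_Schwarz kz_quadratic_form_nonneg[OF k_pd h_k])+
    show "\<exists>b. \<forall>x. \<bar>kz h z0 x y\<bar> \<le> b" for y
    proof -
      obtain b where "\<And>x. \<bar>k x y\<bar> \<le> b" using k_bdd by metis
      then have "\<bar>kz h z0 x y\<bar> \<le> b + b0 + \<bar>k y z0\<bar> + \<bar>k z0 z0\<bar>" for x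
        using b0[of x] unfolding kz by (smt (verit))
      then show ?thesis by blast
    qed
    show "filterlim (\<lambda>x. kz h z0 x x) at_top at_infinity"
      unfolding filterlim_at_top
    proof
      fix Z
      have "eventually (\<lambda>x. Z + 2 * b0 + \<bar>k z0 z0\<bar> \<le> k x x) at_infinity"
        using k_diag unfolding filterlim_at_top by blast
      then show "eventually (\<lambda>x. Z \<le> kz h z0 x x) at_infinity"
        by eventually_elim (use b0 in \<open>smt (verit) kz\<close>)
    qed
    show "kz h z0 x y \<ge> 2 * C_L - 2 * b0" for x y
      using k_lower b0[of x] b0[of y] unfolding kz by (smt (verit))
  qed
  then show ?thesis by blast
qed

theorem proposition2:
  fixes h k :: "real ^ 'n \<Rightarrow> real ^ 'n \<Rightarrow> real"
    and Q :: nat and z0 :: "real ^ 'n" and \<eta> :: "(real ^ 'n) smeasure" and C_L :: real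
  assumes Q: "Q \<ge> 1"
    and h_nonneg: "\<forall>x y. h x y \<ge> 0"
    and h_cnd: "cond_neg_def_kernel h"
    and h_cont: "continuous_on UNIV (\<lambda>(x, y). h x y)"
    and k_pd: "pos_def_kernel k"
    and h_k: "\<forall>x y. h x y = k x x + k y y - 2 * k x y"
    and k_diag: "filterlim (\<lambda>x. k x x) at_top at_infinity"
    and k_bdd: "\<forall>y. \<exists>b. \<forall>x. \<bar>k x y\<bar> \<le> b"
    and k_lower: "\<forall>x y. k x y \<ge> C_L"
    and \<eta>_meas: "smeasure \<eta>"
    and \<eta>_emb: "in_embedding h z0 \<eta>"
    and \<eta>_mass: "smass \<eta> > 0"
  shows "\<exists>\<alpha> X. (\<forall>q<Q. \<alpha> q \<ge> 0) \<and> (\<Sum>q<Q. \<alpha> q) = smass \<eta> \<and>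
     (\<forall>\<beta> Y. (\<forall>q<Q. \<beta> q \<ge> 0) \<and> (\<Sum>q<Q. \<beta> q) = smass \<eta> \<longrightarrow>
        dist2 h z0 (dirac_comb Q \<alpha> X) \<eta> \<le> dist2 h z0 (dirac_comb Q \<beta> Y) \<eta>)"
proof -
  obtain C where "coercive_kernel (kz h z0) C"
    using coercive_kernel_kz[OF h_nonneg h_cont k_pd h_k k_diag k_bdd k_lower] by blast
  then interpret coercive_kernel "kz h z0" C .
  have P: "sets (fst \<eta>) = sets borel" "integrable (fst \<eta>) (\<lambda>y. sqrt (kz h z0 y y))"
    and M: "sets (snd \<eta>) = sets borel" "integrable (snd \<eta>) (\<lambda>y. sqrt (kz h z0 y y))"
    using \<eta>_meas \<eta>_emb unfolding smeasure_def in_embedding_def by auto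
  interpret quantization_energy "kz h z0" C "\<lambda>x. potential (fst \<eta>) x - potential (snd \<eta>) x"
    "moment (fst \<eta>) + moment (snd \<eta>)"
    by (rule quantization_energy_potential_diff[OF P M])
  have dist2_eq: "dist2 h z0 (dirac_comb Q \<beta> Y) \<eta> = energy Q \<beta> Y + sinner (kz h z0) \<eta> \<eta>"
    if "\<beta> \<in> scaled_simplex Q (smass \<eta>)" for \<beta> Y
    using that sinner_dirac_comb_self sinner_dirac_comb[OF _ P M]
    unfolding dist2_def energy_def scaled_simplex_def
    by (simp add: right_diff_distrib sum_subtractf)
  obtain \<alpha> X where \<alpha>: "\<alpha> \<in> scaled_simplex Q (smass \<eta>)"
    and min: "\<And>\<beta> Y. \<beta> \<in> scaled_simplex Q (smass \<eta>) \<Longrightarrow> energy Q \<alpha> X \<le> energy Q \<beta> Y"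
    using energy_has_minimizer[OF Q less_imp_le[OF \<eta>_mass]] by blast
  show ?thesis
    using \<alpha> min dist2_eq unfolding scaled_simplex_def by (intro exI[of _ \<alpha>] exI[of _ X]) auto
qed

end
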